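(* Let $m\ge0$ and $k\ge1$ be integers and $n\ge0$. Then $$\lim_{q\to1}\frac{\sum_{j=0}^{2n}(-1)^jq^{mj}\begin{bmatrix} 2n\\ j\end{bmatrix}_{q^k}}{(q;q^2)_n}=k^n,\qquad \lim_{q\to1}\frac{\sum_{j=0}^{2n+1}(-1)^jq^{mj}\begin{bmatrix} 2n+1\\ j\end{bmatrix}_{q^k}}{(q;q^2)_{n+1}}=mk^n.$$
   Context: $(x;q)_n=\prod_{j=0}^{n-1}(1-q^jx)$. The Gaussian binomial coefficient is $\begin{bmatrix} n\\ j\end{bmatrix}_q=\frac{(q;q)_n}{(q;q)_j(q;q)_{n-j}}$ for $0\le j\le n$, a polynomial in $q$; $\begin{bmatrix} n\\ j\end{bmatrix}_{q^k}$ is this with $q$ replaced by $q^k$. The quotients are rational functions of $q$ and the limits are taken as $q\to1$. *)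

theory Defs
  imports "HOL-Analysis.Analysis"
begin

definition qpoch :: "real \<Rightarrow> real \<Rightarrow> nat \<Rightarrow> real" where
  "qpoch x q n = (\<Prod>j<n. 1 - q ^ j * x)"

definition qbinom :: "nat \<Rightarrow> nat \<Rightarrow> real \<Rightarrow> real" where
  "qbinom n j q = qpoch q q n / (qpoch q q j * qpoch q q (n - j))"

end

theory Submission
  imports Defs
begin

text \<open>The alternating sums \<open>S N = (\<Sum>j\<le>N. (-x)^j [N,j]_Q)\<close> satisfy the three-term recurrence
  \<open>S (N+2) = (1 - x) S (N+1) + x (1 - Q^(N+1)) S N\<close>, a consequence of the q-Pascal rule and the
  absorption identity. For \<open>x = q^m\<close> and \<open>Q = q^k\<close> both \<open>1 - x\<close> and \<open>1 - Q^(N+1)\<close> vanish to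
  first order at \<open>q = 1\<close>, with derivatives \<open>-m\<close> and \<open>-k(N+1)\<close>. Induction on \<open>n\<close> then shows
  that \<open>S (2n)\<close> and \<open>S (2n+1)\<close> vanish to orders \<open>n\<close> and \<open>n+1\<close>, with leading coefficients
  \<open>k^n (2n-1)!!\<close> and \<open>m k^n (2n+1)!!\<close>, while \<open>(q;q^2)_n\<close> vanishes to order \<open>n\<close> with leading
  coefficient \<open>(2n-1)!!\<close>.\<close>

lemma qpoch_Suc: "qpoch x q (Suc n) = qpoch x q n * (1 - q ^ n * x)"
  by (simp add: qpoch_def)

lemma power_Suc_neq_1:
  fixes Q :: real
  assumes "\<bar>Q\<bar> \<noteq> 1"
  shows "Q ^ Suc i \<noteq> 1"
  using assms power_eq_1_iff[of Q "Suc i"] by auto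

lemma qpoch_self_nonzero:
  assumes "\<bar>Q\<bar> \<noteq> 1"
  shows "qpoch Q Q n \<noteq> 0"
  using power_Suc_neq_1[OF assms] by (auto simp: qpoch_def prod_zero_iff mult.commute)

lemma qbinom_0:
  assumes "\<bar>Q\<bar> \<noteq> 1"
  shows "qbinom n 0 Q = 1"
  using qpoch_self_nonzero[OF assms] by (simp add: qbinom_def qpoch_def)

lemma qbinom_self:
  assumes "\<bar>Q\<bar> \<noteq> 1"
  shows "qbinom n n Q = 1"
  using qpoch_self_nonzero[OF assms] by (simp add: qbinom_def qpoch_def)

lemma qbinom_absorption:
  assumes "\<bar>Q\<bar> \<noteq> 1" "j \<le> n"
  shows "(1 - Q ^ Suc j) * qbinom (Suc n) (Suc j) Q = (1 - Q ^ Suc n) * qbinom n j Q"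
proof -
  have "1 - Q ^ Suc j \<noteq> 0"
    using power_Suc_neq_1[OF assms(1)] by simp
  then show ?thesis
    using qpoch_self_nonzero[OF assms(1)] assms(2)
    by (simp add: qbinom_def qpoch_Suc field_simps)
qed

lemma qbinom_pascal:
  assumes "\<bar>Q\<bar> \<noteq> 1" "j < n"
  shows "qbinom (Suc n) (Suc j) Q = qbinom n j Q + Q ^ Suc j * qbinom n (Suc j) Q"
proof -
  obtain r where n: "n = Suc (j + r)"
    using assms(2) less_iff_Suc_add by blast
  define u v w where "u = Q ^ Suc j" and "v = Q ^ Suc r" and "w = Q ^ Suc (j + r)"
  define a b c where "a = qpoch Q Q j" and "b = qpoch Q Q r" and "c = qpoch Q Q (j + r)"
  have nonzero: "a \<noteq> 0" "b \<noteq> 0" "1 - u \<noteq> 0" "1 - v \<noteq> 0"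
    using qpoch_self_nonzero[OF assms(1)] power_Suc_neq_1[OF assms(1)]
    by (auto simp: a_def b_def u_def v_def)
  have lhs: "qbinom (Suc n) (Suc j) Q = c * (1 - w) * (1 - u * v) / (a * (1 - u) * (b * (1 - v)))"
    by (simp add: n qbinom_def qpoch_Suc a_def b_def c_def u_def v_def w_def power_add mult_ac)
  have left: "qbinom n j Q = c * (1 - w) / (a * (b * (1 - v)))"
    by (simp add: n qbinom_def qpoch_Suc a_def b_def c_def v_def w_def mult.commute)
  have right: "qbinom n (Suc j) Q = c * (1 - w) / (a * (1 - u) * b)"
    by (simp add: n qbinom_def qpoch_Suc a_def b_def c_def u_def w_def mult.commute)
  show ?thesis
    unfolding lhs left right u_def[symmetric] using nonzero
    by (simp add: divide_simps) (simp add: algebra_simps)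
qed

text \<open>Gaussian coefficients extended by zero to \<open>j > n\<close>, where \<open>qbinom\<close> has junk values
  coming from truncated subtraction.\<close>

definition gauss_binom :: "nat \<Rightarrow> nat \<Rightarrow> real \<Rightarrow> real" where
  "gauss_binom n j Q = (if j \<le> n then qbinom n j Q else 0)"

lemma gauss_binom_three_term:
  assumes "\<bar>Q\<bar> \<noteq> 1"
  shows "gauss_binom (Suc (Suc n)) (Suc j) Q
           = gauss_binom (Suc n) (Suc j) Q + gauss_binom (Suc n) j Q
             - (1 - Q ^ Suc n) * gauss_binom n j Q"
proof (cases "j \<le> n")
  case True
  then have "qbinom (Suc (Suc n)) (Suc j) Q = qbinom (Suc n) j Q + Q ^ Suc j * qbinom (Suc n) (Suc j) Q"
    using qbinom_pascal[OF assms] by simp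
  moreover have "(1 - Q ^ Suc j) * qbinom (Suc n) (Suc j) Q = (1 - Q ^ Suc n) * qbinom n j Q"
    using qbinom_absorption[OF assms True] .
  ultimately show ?thesis
    using True by (simp add: gauss_binom_def algebra_simps)
next
  case False
  then show ?thesis
    using qbinom_self[OF assms] by (auto simp: gauss_binom_def le_Suc_eq)
qed

definition alt_gauss_sum :: "real \<Rightarrow> real \<Rightarrow> nat \<Rightarrow> real" where
  "alt_gauss_sum x Q n = (\<Sum>j=0..n. (-x) ^ j * qbinom n j Q)"

lemma alt_gauss_sum_eq_sum_lessThan:
  assumes "n < M"
  shows "alt_gauss_sum x Q n = (\<Sum>j<M. (-x) ^ j * gauss_binom n j Q)"
proof -
  have "(\<Sum>j<M. (-x) ^ j * gauss_binom n j Q) = (\<Sum>j=0..n. (-x) ^ j * gauss_binom n j Q)"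
    using assms by (intro sum.mono_neutral_right) (auto simp: gauss_binom_def)
  then show ?thesis
    by (simp add: alt_gauss_sum_def gauss_binom_def)
qed

lemma alt_gauss_sum_0: "alt_gauss_sum x Q 0 = 1"
  by (simp add: alt_gauss_sum_def qbinom_def qpoch_def)

lemma alt_gauss_sum_1:
  assumes "\<bar>Q\<bar> \<noteq> 1"
  shows "alt_gauss_sum x Q (Suc 0) = 1 - x"
  using qbinom_0[OF assms] qbinom_self[OF assms] by (simp add: alt_gauss_sum_def)

lemma alt_gauss_sum_Suc_Suc:
  assumes "\<bar>Q\<bar> \<noteq> 1"
  shows "alt_gauss_sum x Q (Suc (Suc n))
           = (1 - x) * alt_gauss_sum x Q (Suc n) + x * (1 - Q ^ Suc n) * alt_gauss_sum x Q n"
proof -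
  let ?S = "\<lambda>n M. \<Sum>j<M. (-x) ^ j * gauss_binom n j Q"
  let ?A = "\<Sum>j<n + 2. (-x) ^ Suc j * gauss_binom (Suc n) (Suc j) Q"
  have shift: "?S n (Suc M) = 1 + (\<Sum>j<M. (-x) ^ Suc j * gauss_binom n (Suc j) Q)" for n M
    using qbinom_0[OF assms] by (subst sum.lessThan_Suc_shift) (simp add: gauss_binom_def)
  have "alt_gauss_sum x Q (Suc (Suc n)) = ?S (Suc (Suc n)) (n + 3)"
    by (rule alt_gauss_sum_eq_sum_lessThan) simp
  also have "\<dots> = 1 + (\<Sum>j<n + 2. (-x) ^ Suc j * gauss_binom (Suc n) (Suc j) Q
      - x * ((-x) ^ j * gauss_binom (Suc n) j Q) + x * (1 - Q ^ Suc n) * ((-x) ^ j * gauss_binom n j Q))"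
    unfolding numeral_3_eq_3 add_Suc_right shift gauss_binom_three_term[OF assms]
    by (simp add: algebra_simps)
  also have "\<dots> = 1 + ?A - x * ?S (Suc n) (n + 2) + x * (1 - Q ^ Suc n) * ?S n (n + 2)"
    by (simp only: sum.distrib sum_subtractf sum_distrib_left)
  also have "1 + ?A = ?S (Suc n) (n + 3)"
    unfolding numeral_3_eq_3 add_Suc_right shift by simp
  also have "?S (Suc n) (n + 3) - x * ?S (Suc n) (n + 2) + x * (1 - Q ^ Suc n) * ?S n (n + 2)
      = (1 - x) * alt_gauss_sum x Q (Suc n) + x * (1 - Q ^ Suc n) * alt_gauss_sum x Q n"
  proof -
    have "?S (Suc n) (n + 3) = alt_gauss_sum x Q (Suc n)"
      "?S (Suc n) (n + 2) = alt_gauss_sum x Q (Suc n)" "?S n (n + 2) = alt_gauss_sum x Q n"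
      by (simp_all only: alt_gauss_sum_eq_sum_lessThan[symmetric] less_add_Suc1 lessI add_Suc_right
          numeral_3_eq_3 numeral_2_eq_2)
    then show ?thesis
      by (simp only:) (simp add: algebra_simps)
  qed
  finally show ?thesis .
qed

lemma alt_gauss_sum_power_Suc_Suc:
  fixes q :: real
  assumes "\<bar>q ^ k\<bar> \<noteq> 1"
  shows "alt_gauss_sum (q ^ m) (q ^ k) (Suc (Suc n))
           = (1 - q ^ m) * alt_gauss_sum (q ^ m) (q ^ k) (Suc n)
             + q ^ m * (1 - q ^ (k * Suc n)) * alt_gauss_sum (q ^ m) (q ^ k) n"
  unfolding power_mult by (rule alt_gauss_sum_Suc_Suc[OF assms])

lemma alt_gauss_sum_power_Suc_Suc_scaled:
  fixes q :: real and m k n :: nat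
  assumes "q \<noteq> 1" "\<bar>q ^ k\<bar> \<noteq> 1"
  defines "S N \<equiv> alt_gauss_sum (q ^ m) (q ^ k) N"
  shows "S (2 * n + 2) / (1 - q) ^ (n + 1)
           = (1 - q ^ m) * (S (2 * n + 1) / (1 - q) ^ (n + 1))
             + q ^ m * ((1 - q ^ (k * (2 * n + 1))) / (1 - q)) * (S (2 * n) / (1 - q) ^ n)"
    and "S (2 * n + 3) / (1 - q) ^ (n + 2)
           = (1 - q ^ m) / (1 - q) * (S (2 * n + 2) / (1 - q) ^ (n + 1))
             + q ^ m * ((1 - q ^ (k * (2 * n + 2))) / (1 - q)) * (S (2 * n + 1) / (1 - q) ^ (n + 1))"
proof -
  \<comment> \<open>an opaque \<open>e = 1 - q\<close> keeps \<open>field_simps\<close> from multiplying out its powers\<close>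
  define e where "e = 1 - q"
  have "e \<noteq> 0"
    using assms(1) by (simp add: e_def)
  have rec_even: "S (2 * n + 2)
      = (1 - q ^ m) * S (2 * n + 1) + q ^ m * (1 - q ^ (k * (2 * n + 1))) * S (2 * n)"
    using alt_gauss_sum_power_Suc_Suc[OF assms(2), of m "2 * n"] by (simp add: S_def)
  show "S (2 * n + 2) / (1 - q) ^ (n + 1)
      = (1 - q ^ m) * (S (2 * n + 1) / (1 - q) ^ (n + 1))
        + q ^ m * ((1 - q ^ (k * (2 * n + 1))) / (1 - q)) * (S (2 * n) / (1 - q) ^ n)"
    unfolding rec_even e_def[symmetric] using \<open>e \<noteq> 0\<close> by (simp add: field_simps)
  have rec_odd: "S (2 * n + 3)
      = (1 - q ^ m) * S (2 * n + 2) + q ^ m * (1 - q ^ (k * (2 * n + 2))) * S (2 * n + 1)"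
    using alt_gauss_sum_power_Suc_Suc[OF assms(2), of m "2 * n + 1"]
    by (simp add: S_def numeral_3_eq_3)
  show "S (2 * n + 3) / (1 - q) ^ (n + 2)
      = (1 - q ^ m) / (1 - q) * (S (2 * n + 2) / (1 - q) ^ (n + 1))
        + q ^ m * ((1 - q ^ (k * (2 * n + 2))) / (1 - q)) * (S (2 * n + 1) / (1 - q) ^ (n + 1))"
    unfolding rec_odd e_def[symmetric] using \<open>e \<noteq> 0\<close> by (simp add: field_simps)
qed

lemma tendsto_one_minus_power_div:
  "((\<lambda>q::real. (1 - q ^ p) / (1 - q)) \<longlongrightarrow> real p) (at 1)"
proof -
  have "\<forall>\<^sub>F q in at (1::real). (\<Sum>i<p. q ^ i) = (1 - q ^ p) / (1 - q)"
    by (auto simp: eventually_at_filter one_diff_power_eq)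
  moreover have "((\<lambda>q::real. \<Sum>i<p. q ^ i) \<longlongrightarrow> real p) (at 1)"
    by (rule tendsto_eq_intros refl | simp)+
  ultimately show ?thesis
    by (rule Lim_transform_eventually[rotated])
qed

lemma qpoch_power_tendsto:
  "((\<lambda>q::real. qpoch (q ^ a) (q ^ b) n / (1 - q) ^ n) \<longlongrightarrow> (\<Prod>j<n. real (b * j + a))) (at 1)"
proof -
  have "qpoch (q ^ a) (q ^ b) n / (1 - q) ^ n = (\<Prod>j<n. (1 - q ^ (b * j + a)) / (1 - q))" for q :: real
    by (simp add: qpoch_def prod_dividef power_add power_mult)
  then show ?thesis
    by (simp only:) (intro tendsto_prod tendsto_one_minus_power_div)
qed

lemma eventually_at_1_power_neq_1:
  assumes "k \<ge> 1"
  shows "\<forall>\<^sub>F q in at (1::real). q \<noteq> 1 \<and> \<bar>q ^ k\<bar> \<noteq> 1"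
proof -
  have "\<forall>\<^sub>F q in at (1::real). q \<in> {0<..} - {1}"
    by (rule eventually_at_in_open) auto
  then show ?thesis
  proof eventually_elim
    case (elim q)
    then show ?case
      using assms power_eq_1_iff[of q k] by auto
  qed
qed

lemma alt_gauss_sum_power_tendsto:
  fixes m k n :: nat
  assumes "k \<ge> 1"
  shows "((\<lambda>q::real. alt_gauss_sum (q ^ m) (q ^ k) (2 * n) / (1 - q) ^ n)
            \<longlongrightarrow> real k ^ n * (\<Prod>i<n. real (2 * i + 1))) (at 1) \<and>
         ((\<lambda>q::real. alt_gauss_sum (q ^ m) (q ^ k) (2 * n + 1) / (1 - q) ^ (n + 1))
            \<longlongrightarrow> real m * real k ^ n * (\<Prod>i<n + 1. real (2 * i + 1))) (at 1)"
proof (induction n)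
  case 0
  have "\<forall>\<^sub>F q in at (1::real). (1 - q ^ m) / (1 - q) = alt_gauss_sum (q ^ m) (q ^ k) 1 / (1 - q) ^ 1"
    using eventually_at_1_power_neq_1[OF assms] by eventually_elim (simp add: alt_gauss_sum_1)
  from Lim_transform_eventually[OF tendsto_one_minus_power_div this]
  show ?case
    by (simp add: alt_gauss_sum_0)
next
  case (Suc n)
  let ?D = "\<lambda>n. \<Prod>i<n. real (2 * i + 1)"
  define R where "R p q = (1 - q ^ p) / (1 - q)" for p and q :: real
  define T where "T N j q = alt_gauss_sum (q ^ m) (q ^ k) N / (1 - q) ^ j" for N j and q :: real
  have even: "(T (2 * n) n \<longlongrightarrow> real k ^ n * ?D n) (at 1)"
   and odd: "(T (2 * n + 1) (n + 1) \<longlongrightarrow> real m * real k ^ n * ?D (n + 1)) (at 1)"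
    using Suc.IH unfolding T_def by auto
  have R: "(R p \<longlongrightarrow> real p) (at 1)" for p
    unfolding R_def by (rule tendsto_one_minus_power_div)
  have "((\<lambda>q. (1 - q ^ m) * T (2 * n + 1) (n + 1) q + q ^ m * R (k * (2 * n + 1)) q * T (2 * n) n q)
      \<longlongrightarrow> real k ^ (n + 1) * ?D (n + 1)) (at 1)"
    by (rule tendsto_eq_intros even odd R refl | simp add: algebra_simps)+
  moreover have "\<forall>\<^sub>F q in at 1. (1 - q ^ m) * T (2 * n + 1) (n + 1) q
      + q ^ m * R (k * (2 * n + 1)) q * T (2 * n) n q = T (2 * n + 2) (n + 1) q"
    using eventually_at_1_power_neq_1[OF assms]
    by eventually_elim (auto simp only: T_def R_def alt_gauss_sum_power_Suc_Suc_scaled simp_thms)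
  ultimately have even': "(T (2 * n + 2) (n + 1) \<longlongrightarrow> real k ^ (n + 1) * ?D (n + 1)) (at 1)"
    by (rule Lim_transform_eventually)
  have "((\<lambda>q. R m q * T (2 * n + 2) (n + 1) q + q ^ m * R (k * (2 * n + 2)) q * T (2 * n + 1) (n + 1) q)
      \<longlongrightarrow> real m * real k ^ (n + 1) * ?D (n + 2)) (at 1)"
    by (rule tendsto_eq_intros even' odd R refl | simp add: algebra_simps)+
  moreover have "\<forall>\<^sub>F q in at 1. R m q * T (2 * n + 2) (n + 1) q
      + q ^ m * R (k * (2 * n + 2)) q * T (2 * n + 1) (n + 1) q = T (2 * n + 3) (n + 2) q"
    using eventually_at_1_power_neq_1[OF assms]
    by eventually_elim (auto simp only: T_def R_def alt_gauss_sum_power_Suc_Suc_scaled simp_thms)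
  ultimately have odd': "(T (2 * n + 3) (n + 2) \<longlongrightarrow> real m * real k ^ (n + 1) * ?D (n + 2)) (at 1)"
    by (rule Lim_transform_eventually)
  from even' odd' show ?case
    by (simp add: T_def [abs_def] numeral_3_eq_3)
qed

lemma tendsto_alt_sum_div_qpoch:
  fixes m k N p :: nat
  assumes "((\<lambda>q::real. alt_gauss_sum (q ^ m) (q ^ k) N / (1 - q) ^ p)
             \<longlongrightarrow> L * (\<Prod>i<p. real (2 * i + 1))) (at 1)"
  shows "((\<lambda>q::real. (\<Sum>j=0..N. (-1) ^ j * q ^ (m * j) * qbinom N j (q ^ k)) / qpoch q (q ^ 2) p)
           \<longlongrightarrow> L) (at 1)"
proof -
  have sum_eq: "(\<Sum>j=0..N. (-1) ^ j * q ^ (m * j) * qbinom N j (q ^ k)) = alt_gauss_sum (q ^ m) (q ^ k) N"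
    for q :: real
    by (simp add: alt_gauss_sum_def power_minus[of "q ^ m"] power_mult)
  have "(\<Prod>i<p. real (2 * i + 1)) \<noteq> 0"
    by simp
  then have "((\<lambda>q. (alt_gauss_sum (q ^ m) (q ^ k) N / (1 - q) ^ p) / (qpoch q (q ^ 2) p / (1 - q) ^ p))
      \<longlongrightarrow> L) (at 1)"
    using tendsto_divide[OF assms qpoch_power_tendsto[of 1 2 p, unfolded power_one_right]] by simp
  moreover have "\<forall>\<^sub>F q in at (1::real).
      (alt_gauss_sum (q ^ m) (q ^ k) N / (1 - q) ^ p) / (qpoch q (q ^ 2) p / (1 - q) ^ p)
      = (\<Sum>j=0..N. (-1) ^ j * q ^ (m * j) * qbinom N j (q ^ k)) / qpoch q (q ^ 2) p"
    by (simp add: eventually_at_filter sum_eq)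
  ultimately show ?thesis
    by (rule Lim_transform_eventually)
qed

theorem theorem2p2:
  fixes m k n :: nat
  assumes "k \<ge> 1"
  shows "(((\<lambda>q::real. (\<Sum>j=0..2*n. (-1) ^ j * q ^ (m * j) * qbinom (2*n) j (q ^ k))
            / qpoch q (q ^ 2) n) \<longlongrightarrow> real k ^ n) (at 1)) \<and>
         (((\<lambda>q::real. (\<Sum>j=0..2*n+1. (-1) ^ j * q ^ (m * j) * qbinom (2*n+1) j (q ^ k))
            / qpoch q (q ^ 2) (n + 1)) \<longlongrightarrow> real m * real k ^ n) (at 1))"
proof -
  note lim = alt_gauss_sum_power_tendsto[OF assms, of m n]
  show ?thesis
    by (intro conjI tendsto_alt_sum_div_qpoch lim[THEN conjunct1] lim[THEN conjunct2])
qed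

end
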